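(* Let $0<\epsilon<1$, $0<\rho<1$ and integers $n\ge k\ge 1$. If $\mathbf{A}$ is a random $n\times k$ binary matrix with the Bernoulli$(n,k,\rho)$ distribution, then \[ \mathbb{E}_{\mathbf{A}}\big(p_c(\mathbf{A})\big)\;\ge\;\sum_{i=0}^{n}\binom{n}{i}\frac{2^n\,\epsilon^{2i}(1-\epsilon)^{2(n-i)}}{\sum_{j=0}^{k}\binom{k}{j}\big(1-(1-2\epsilon)(1-2\rho)^j\big)^i\big(1+(1-2\epsilon)(1-2\rho)^j\big)^{n-i}}. \]
   Context: All arithmetic on binary vectors and matrices is in $\mathrm{GF}(2)$. A binary linear code with generating matrix $\mathbf{A}\in\{0,1\}^{n\times k}$ encodes a message $X\in\{0,1\}^k$ as $\mathbf{A}X\in\{0,1\}^n$. Over the binary symmetric channel (BSC) with cross-over probability $\epsilon$, the channel output is $Y=\mathbf{A}X+N$, where $X$ is uniformly distributed on $\{0,1\}^k$ and $N\in\{0,1\}^n$ has i.i.d. Bernoulli$(\epsilon)$ entries (equal to $1$ with probability $\epsilon$), independent of $X$. The decoder, on receiving $Y=y$, outputs a random estimate $\hat X$ drawn from the posterior distribution $\mathbb{P}(X=\cdot\mid Y=y)$. Its probability of correct detection is $p_c(\mathbf{A})=\sum_{x,y}\mathbb{P}(X=x,Y=y)\,\mathbb{P}(X=x\mid Y=y)=\mathbb{E}_{X,Y}\big[\mathbb{P}(X\mid Y)\big]$, and the error probability is $p_e(\mathbf{A})=1-p_c(\mathbf{A})$. The Bernoulli$(n,k,\rho)$ distribution on the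 set $\mathcal{A}_{n\times k}$ of all binary $n\times k$ matrices is the one in which all $nk$ entries are i.i.d. Bernoulli$(\rho)$. *)

theory Defs
  imports "HOL-Analysis.Analysis"
begin

text \<open>GF(2) arithmetic: True = 1, False = 0, addition = xor, product = and.\<close>

definition bvecs :: "nat \<Rightarrow> (nat \<Rightarrow> bool) set" where
  "bvecs m = {v. \<forall>i. m \<le> i \<longrightarrow> \<not> v i}"

definition bmats :: "nat \<Rightarrow> nat \<Rightarrow> (nat \<Rightarrow> nat \<Rightarrow> bool) set" where
  "bmats n k = {A. \<forall>i j. (n \<le> i \<or> k \<le> j) \<longrightarrow> \<not> A i j}"

definition encode :: "nat \<Rightarrow> nat \<Rightarrow> (nat \<Rightarrow> nat \<Rightarrow> bool) \<Rightarrow> (nat \<Rightarrow> bool) \<Rightarrow> (nat \<Rightarrow> bool)" where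
  "encode n k A x = (\<lambda>i. i < n \<and> odd (card {j\<in>{0..<k}. A i j \<and> x j}))"

definition hdist :: "nat \<Rightarrow> (nat \<Rightarrow> bool) \<Rightarrow> (nat \<Rightarrow> bool) \<Rightarrow> nat" where
  "hdist n u v = card {i\<in>{0..<n}. u i \<noteq> v i}"

text \<open>Joint probability P(X = x, Y = y) for Y = A X + N over BSC(eps), X uniform.\<close>
definition joint_prob :: "nat \<Rightarrow> nat \<Rightarrow> real \<Rightarrow> (nat \<Rightarrow> nat \<Rightarrow> bool) \<Rightarrow> (nat \<Rightarrow> bool) \<Rightarrow> (nat \<Rightarrow> bool) \<Rightarrow> real" where
  "joint_prob n k eps A x y =
     (1 / 2 ^ k) * eps ^ hdist n (encode n k A x) y * (1 - eps) ^ (n - hdist n (encode n k A x) y)"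

definition out_prob :: "nat \<Rightarrow> nat \<Rightarrow> real \<Rightarrow> (nat \<Rightarrow> nat \<Rightarrow> bool) \<Rightarrow> (nat \<Rightarrow> bool) \<Rightarrow> real" where
  "out_prob n k eps A y = (\<Sum>x\<in>bvecs k. joint_prob n k eps A x y)"

definition posterior :: "nat \<Rightarrow> nat \<Rightarrow> real \<Rightarrow> (nat \<Rightarrow> nat \<Rightarrow> bool) \<Rightarrow> (nat \<Rightarrow> bool) \<Rightarrow> (nat \<Rightarrow> bool) \<Rightarrow> real" where
  "posterior n k eps A x y = joint_prob n k eps A x y / out_prob n k eps A y"

text \<open>Probability of correct detection of the posterior-sampling decoder.\<close>
definition p_c :: "nat \<Rightarrow> nat \<Rightarrow> real \<Rightarrow> (nat \<Rightarrow> nat \<Rightarrow> bool) \<Rightarrow> real" where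
  "p_c n k eps A = (\<Sum>x\<in>bvecs k. \<Sum>y\<in>bvecs n. joint_prob n k eps A x y * posterior n k eps A x y)"

definition bern_mat_prob :: "nat \<Rightarrow> nat \<Rightarrow> real \<Rightarrow> (nat \<Rightarrow> nat \<Rightarrow> bool) \<Rightarrow> real" where
  "bern_mat_prob n k rho A =
     rho ^ card {(i,j). i < n \<and> j < k \<and> A i j} * (1 - rho) ^ (n * k - card {(i,j). i < n \<and> j < k \<and> A i j})"

end

theory Submission
  imports Defs
begin

(* Write lik y c for the probability that the channel turns the codeword c into y, and
   out_weight A y = sum_z lik y (A z), which is 2^k times P(Y = y).
   (1) The code is linear and the channel is invariant under translation by codewords, so
       the posterior mass of the transmitted message depends only on the noise; this gives
       p_c(A) = sum_y lik y 0 ^ 2 / out_weight A y                        (p_c_formula).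
   (2) The map t \<mapsto> 1/t is convex, so by Jensen E_A[1/out_weight A y] \<ge> 1/E_A[out_weight A y]
                                                          (expected_p_c_lower_bound).
   (3) Under the Bernoulli(rho) law the rows of A are independent and the parity of a row
       against z has bias (1-2rho)^|z|; hence E_A[lik y (A z)] depends only on |y| and |z|
       and has a product form                                   (matrix_average).
   (4) Summing over vectors by Hamming weight (sum_bvecs_by_weight) turns the bound into
       the binomial sums of the statement. *)

(* Functions on {..<m} with values in D, padded by the constant d0 outside: the common
   shape of binary vectors (d0 = False) and binary matrices viewed as lists of rows. *)
definition padded :: "nat \<Rightarrow> 'a set \<Rightarrow> 'a \<Rightarrow> (nat \<Rightarrow> 'a) set" where
  "padded m D d0 = {f. (\<forall>i<m. f i \<in> D) \<and> (\<forall>i. m \<le> i \<longrightarrow> f i = d0)}"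

lemma bij_betw_padded_PiE:
  "bij_betw (\<lambda>f. restrict f {..<m}) (padded m D d0) (PiE {..<m} (\<lambda>_. D))"
proof (rule bij_betw_byWitness[where f' = "\<lambda>g i. if i < m then g i else d0"])
  show "\<forall>f\<in>padded m D d0. (\<lambda>i. if i < m then restrict f {..<m} i else d0) = f"
  proof
    fix f assume "f \<in> padded m D d0"
    then have "f i = d0" if "\<not> i < m" for i
      using that unfolding padded_def by simp
    then show "(\<lambda>i. if i < m then restrict f {..<m} i else d0) = f"
      by (intro ext) simp
  qed
  show "\<forall>g\<in>PiE {..<m} (\<lambda>_. D). restrict (\<lambda>i. if i < m then g i else d0) {..<m} = g"
    by (auto simp: fun_eq_iff PiE_def extensional_def)
  show "(\<lambda>f. restrict f {..<m}) ` padded m D d0 \<subseteq> PiE {..<m} (\<lambda>_. D)"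
  proof (rule image_subsetI)
    fix f assume "f \<in> padded m D d0"
    then have "f \<in> Pi {..<m} (\<lambda>_. D)" unfolding padded_def by blast
    then show "restrict f {..<m} \<in> PiE {..<m} (\<lambda>_. D)" by (rule restrict_PiE[THEN iffD2])
  qed
  show "(\<lambda>g i. if i < m then g i else d0) ` PiE {..<m} (\<lambda>_. D) \<subseteq> padded m D d0"
  proof (rule image_subsetI)
    fix g assume "g \<in> PiE {..<m} (\<lambda>_. D)"
    then have "g i \<in> D" if "i < m" for i
      using that by (blast intro: PiE_mem)
    then show "(\<lambda>i. if i < m then g i else d0) \<in> padded m D d0"
      unfolding padded_def by simp
  qed
qed

lemma finite_padded: "finite D \<Longrightarrow> finite (padded m D d0)"
  using bij_betw_finite[OF bij_betw_padded_PiE[of m D d0]] by (simp add: finite_PiE)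

lemma sum_prod_padded:
  fixes F :: "nat \<Rightarrow> 'a \<Rightarrow> 'b::comm_semiring_1"
  assumes "finite D"
  shows "(\<Sum>f\<in>padded m D d0. \<Prod>i<m. F i (f i)) = (\<Prod>i<m. \<Sum>d\<in>D. F i d)"
proof -
  have "(\<Sum>f\<in>padded m D d0. \<Prod>i<m. F i (f i))
      = (\<Sum>f\<in>padded m D d0. \<Prod>i<m. F i (restrict f {..<m} i))"
    by simp
  also have "\<dots> = (\<Sum>g\<in>PiE {..<m} (\<lambda>_. D). \<Prod>i<m. F i (g i))"
    by (rule sum.reindex_bij_betw[OF bij_betw_padded_PiE])
  also have "\<dots> = (\<Prod>i<m. \<Sum>d\<in>D. F i d)"
    by (rule prod_sum_PiE[symmetric]) (use assms in auto)
  finally show ?thesis .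
qed

lemma prod_if_card:
  fixes a b :: "'b::comm_monoid_mult"
  assumes "finite S"
  shows "(\<Prod>x\<in>S. if P x then a else b) = a ^ card {x\<in>S. P x} * b ^ (card S - card {x\<in>S. P x})"
proof -
  have "S \<inter> - {x. P x} = S - {x\<in>S. P x}" "S \<inter> {x. P x} = {x\<in>S. P x}" by auto
  then show ?thesis
    using prod.If_cases[OF assms, of P "\<lambda>_. a" "\<lambda>_. b"] assms by (simp add: card_Diff_subset)
qed

lemma bvecs_padded: "bvecs m = padded m UNIV False"
  unfolding bvecs_def padded_def by auto

lemma bmats_padded: "bmats n k = padded n (bvecs k) (\<lambda>_. False)"
  unfolding bmats_def padded_def bvecs_def by (auto simp: fun_eq_iff) (meson not_le)

lemma finite_bvecs: "finite (bvecs m)"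
  unfolding bvecs_padded by (rule finite_padded) simp

lemma finite_bmats: "finite (bmats n k)"
  unfolding bmats_padded by (rule finite_padded[OF finite_bvecs])

lemma sum_prod_bvecs:
  fixes F :: "nat \<Rightarrow> bool \<Rightarrow> 'b::comm_semiring_1"
  shows "(\<Sum>v\<in>bvecs m. \<Prod>i<m. F i (v i)) = (\<Prod>i<m. F i True + F i False)"
  unfolding bvecs_padded by (subst sum_prod_padded) (auto simp: UNIV_bool add.commute)

lemma card_bvecs: "card (bvecs m) = 2 ^ m"
  using sum_prod_bvecs[where F = "\<lambda>_ _. 1::nat" and m = m] by (simp add: numeral_2_eq_2)

definition weight :: "nat \<Rightarrow> (nat \<Rightarrow> bool) \<Rightarrow> nat" where
  "weight m v = card {l. l < m \<and> v l}"

lemma sum_bvecs_by_weight: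
  fixes f :: "nat \<Rightarrow> 'b::comm_semiring_1"
  shows "(\<Sum>v\<in>bvecs m. f (weight m v)) = (\<Sum>j=0..m. of_nat (m choose j) * f j)"
proof -
  have bij: "bij_betw (\<lambda>v. {l. l < m \<and> v l}) (bvecs m) (Pow {..<m})"
  proof (rule bij_betw_byWitness[where f' = "\<lambda>S l. l \<in> S"])
    show "\<forall>v\<in>bvecs m. (\<lambda>l. l \<in> {l. l < m \<and> v l}) = v"
      unfolding bvecs_def by (auto simp: fun_eq_iff) (meson not_le)
    show "\<forall>S\<in>Pow {..<m}. {l. l < m \<and> l \<in> S} = S" by auto
    show "(\<lambda>v. {l. l < m \<and> v l}) ` bvecs m \<subseteq> Pow {..<m}" by auto
    show "(\<lambda>S l. l \<in> S) ` Pow {..<m} \<subseteq> bvecs m" unfolding bvecs_def by auto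
  qed
  have "(\<Sum>v\<in>bvecs m. f (weight m v)) = (\<Sum>S\<in>Pow {..<m}. f (card S))"
    unfolding weight_def using sum.reindex_bij_betw[OF bij, of "\<lambda>S. f (card S)"] by simp
  also have "\<dots> = (\<Sum>j=0..m. \<Sum>S | S \<in> Pow {..<m} \<and> card S = j. f (card S))"
    by (rule sum.group[symmetric]) (auto intro: card_mono[of "{..<m}", simplified])
  also have "\<dots> = (\<Sum>j=0..m. of_nat (m choose j) * f j)"
  proof (rule sum.cong[OF refl])
    fix j
    have "{S. S \<in> Pow {..<m} \<and> card S = j} = {S. S \<subseteq> {..<m} \<and> card S = j}" by auto
    then have "card {S. S \<in> Pow {..<m} \<and> card S = j} = m choose j"
      using n_subsets[of "{..<m}" j] by simp
    moreover have "(\<Sum>S | S \<in> Pow {..<m} \<and> card S = j. f (card S))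
        = (\<Sum>S | S \<in> Pow {..<m} \<and> card S = j. f j)"
      by (rule sum.cong) auto
    ultimately show "(\<Sum>S | S \<in> Pow {..<m} \<and> card S = j. f (card S)) = of_nat (m choose j) * f j"
      by simp
  qed
  finally show ?thesis .
qed

(* The character (-1)^b of GF(2); it turns parities into products. *)
definition sign :: "bool \<Rightarrow> real" where
  "sign b = (if b then -1 else 1)"

lemma sign_xor: "sign (a \<noteq> b) = sign a * sign b"
  unfolding sign_def by auto

lemma sign_inj: "sign a = sign b \<Longrightarrow> a = b"
  unfolding sign_def by (auto split: if_splits)

definition row_parity :: "nat \<Rightarrow> (nat \<Rightarrow> bool) \<Rightarrow> (nat \<Rightarrow> bool) \<Rightarrow> bool" where
  "row_parity k r z = odd (card {j\<in>{0..<k}. r j \<and> z j})"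

lemma sign_row_parity: "sign (row_parity k r z) = (\<Prod>j<k. sign (r j \<and> z j))"
proof -
  have "(\<Prod>j<k. sign (r j \<and> z j)) = (\<Prod>j<k. if r j \<and> z j then -1 else 1)"
    unfolding sign_def by simp
  also have "\<dots> = (-1) ^ card {j\<in>{..<k}. r j \<and> z j}"
    by (subst prod_if_card) auto
  finally show ?thesis
    unfolding row_parity_def sign_def by (simp add: atLeast0LessThan)
qed

lemma encode_row_parity: "l < n \<Longrightarrow> encode n k A z l = row_parity k (A l) z"
  unfolding encode_def row_parity_def by simp

definition vxor :: "(nat \<Rightarrow> bool) \<Rightarrow> (nat \<Rightarrow> bool) \<Rightarrow> (nat \<Rightarrow> bool)" where
  "vxor u v = (\<lambda>i. u i \<noteq> v i)"

lemma vxor_bvecs: "u \<in> bvecs m \<Longrightarrow> v \<in> bvecs m \<Longrightarrow> vxor u v \<in> bvecs m"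
  unfolding bvecs_def vxor_def by auto

lemma vxor_cancel: "vxor (vxor u v) v = u" "vxor v (vxor v u) = u"
  unfolding vxor_def by auto

lemma encode_bvecs: "encode n k A x \<in> bvecs n"
  unfolding bvecs_def encode_def by auto

lemma encode_vxor: "encode n k A (vxor x z) = vxor (encode n k A x) (encode n k A z)"
proof
  fix l
  show "encode n k A (vxor x z) l = vxor (encode n k A x) (encode n k A z) l"
  proof (cases "l < n")
    case True
    have "sign (row_parity k (A l) (vxor x z)) = sign (row_parity k (A l) x) * sign (row_parity k (A l) z)"
      unfolding sign_row_parity prod.distrib[symmetric] vxor_def
      by (rule prod.cong) (auto simp: sign_def)
    then have "row_parity k (A l) (vxor x z) = (row_parity k (A l) x \<noteq> row_parity k (A l) z)"
      by (intro sign_inj) (simp only: sign_xor)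
    then show ?thesis using True by (simp add: encode_row_parity vxor_def)
  next
    case False
    then show ?thesis by (simp add: encode_def vxor_def)
  qed
qed

definition lik :: "nat \<Rightarrow> real \<Rightarrow> (nat \<Rightarrow> bool) \<Rightarrow> (nat \<Rightarrow> bool) \<Rightarrow> real" where
  "lik n e y c = (\<Prod>l<n. if c l = y l then 1 - e else e)"

lemma lik_pos: "0 < e \<Longrightarrow> e < 1 \<Longrightarrow> 0 < lik n e y c"
  unfolding lik_def by (rule prod_pos) auto

lemma lik_vxor: "lik n e (vxor y v) (vxor v c) = lik n e y c"
  unfolding lik_def vxor_def by (rule prod.cong) auto

lemma lik_vxor_zero: "lik n e (vxor y v) (\<lambda>_. False) = lik n e y v"
  unfolding lik_def vxor_def by (rule prod.cong) auto

lemma lik_zero: "lik n e y (\<lambda>_. False) = e ^ weight n y * (1 - e) ^ (n - weight n y)"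
proof -
  have "lik n e y (\<lambda>_. False) = (\<Prod>l<n. if y l then e else 1 - e)"
    unfolding lik_def by (rule prod.cong) auto
  then show ?thesis by (simp add: prod_if_card weight_def)
qed

lemma joint_prob_lik: "joint_prob n k e A x y = lik n e y (encode n k A x) / 2 ^ k"
proof -
  have "lik n e y (encode n k A x) = (\<Prod>l<n. if encode n k A x l \<noteq> y l then e else 1 - e)"
    unfolding lik_def by (rule prod.cong) auto
  also have "\<dots> = e ^ hdist n (encode n k A x) y * (1 - e) ^ (n - hdist n (encode n k A x) y)"
    by (subst prod_if_card) (auto simp: hdist_def atLeast0LessThan)
  finally show ?thesis unfolding joint_prob_def by simp
qed

definition out_weight :: "nat \<Rightarrow> nat \<Rightarrow> real \<Rightarrow> (nat \<Rightarrow> nat \<Rightarrow> bool) \<Rightarrow> (nat \<Rightarrow> bool) \<Rightarrow> real" where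
  "out_weight n k e A y = (\<Sum>z\<in>bvecs k. lik n e y (encode n k A z))"

lemma out_prob_weight: "out_prob n k e A y = out_weight n k e A y / 2 ^ k"
  unfolding out_prob_def out_weight_def joint_prob_lik by (simp add: sum_divide_distrib)

lemma out_weight_pos: "0 < e \<Longrightarrow> e < 1 \<Longrightarrow> 0 < out_weight n k e A y"
  unfolding out_weight_def
  by (rule sum_pos[OF finite_bvecs]) (auto intro: lik_pos simp: bvecs_def)

(* Translating the output by a codeword permutes the messages, so out_weight is invariant. *)
lemma out_weight_vxor:
  assumes x: "x \<in> bvecs k"
  shows "out_weight n k e A (vxor y (encode n k A x)) = out_weight n k e A y"
proof -
  have "out_weight n k e A (vxor y (encode n k A x))
      = (\<Sum>z\<in>bvecs k. lik n e (vxor y (encode n k A x)) (encode n k A (vxor x z)))"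
    unfolding out_weight_def
    by (rule sum.reindex_bij_witness[where i = "vxor x" and j = "vxor x"])
       (auto simp: vxor_bvecs[OF x] vxor_cancel)
  then show ?thesis unfolding encode_vxor lik_vxor out_weight_def .
qed

(* Step (1): by translation invariance every message contributes the same amount. *)
lemma p_c_formula:
  assumes e: "0 < e" "e < 1"
  shows "p_c n k e A = (\<Sum>y\<in>bvecs n. lik n e y (\<lambda>_. False) ^ 2 / out_weight n k e A y)"
proof -
  have summand: "joint_prob n k e A x y * posterior n k e A x y
      = lik n e y (encode n k A x) ^ 2 / (2 ^ k * out_weight n k e A y)" for x y
    unfolding posterior_def out_prob_weight joint_prob_lik
    using out_weight_pos[OF e, of n k A y] by (simp add: field_simps power2_eq_square)
  have shift: "(\<Sum>y\<in>bvecs n. lik n e y (encode n k A x) ^ 2 / (2 ^ k * out_weight n k e A y))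
      = (\<Sum>y\<in>bvecs n. lik n e y (\<lambda>_. False) ^ 2 / (2 ^ k * out_weight n k e A y))"
    if x: "x \<in> bvecs k" for x
    by (rule sum.reindex_bij_witness[where i = "\<lambda>y. vxor y (encode n k A x)"
                                        and j = "\<lambda>y. vxor y (encode n k A x)"])
       (auto simp: vxor_bvecs encode_bvecs vxor_cancel lik_vxor_zero out_weight_vxor[OF x])
  have "p_c n k e A = (\<Sum>x\<in>bvecs k. \<Sum>y\<in>bvecs n. lik n e y (\<lambda>_. False) ^ 2 / (2 ^ k * out_weight n k e A y))"
    unfolding p_c_def summand by (rule sum.cong[OF refl] shift)+
  also have "\<dots> = (\<Sum>y\<in>bvecs n. lik n e y (\<lambda>_. False) ^ 2 / out_weight n k e A y)"
    by (simp add: card_bvecs sum_distrib_left)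
  finally show ?thesis .
qed

definition row_prob :: "nat \<Rightarrow> real \<Rightarrow> (nat \<Rightarrow> bool) \<Rightarrow> real" where
  "row_prob k p r = (\<Prod>j<k. if r j then p else 1 - p)"

lemma bern_mat_prob_rows: "bern_mat_prob n k p A = (\<Prod>i<n. row_prob k p (A i))"
proof -
  have "(\<Prod>i<n. row_prob k p (A i))
      = (\<Prod>x\<in>{..<n} \<times> {..<k}. if (case x of (i, j) \<Rightarrow> A i j) then p else 1 - p)"
    unfolding row_prob_def prod.cartesian_product by (rule prod.cong) auto
  also have "\<dots> = p ^ card {x\<in>{..<n} \<times> {..<k}. case x of (i, j) \<Rightarrow> A i j} *
      (1 - p) ^ (n * k - card {x\<in>{..<n} \<times> {..<k}. case x of (i, j) \<Rightarrow> A i j})"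
    by (subst prod_if_card) (auto simp: card_cartesian_product)
  also have "{x\<in>{..<n} \<times> {..<k}. case x of (i, j) \<Rightarrow> A i j} = {(i, j). i < n \<and> j < k \<and> A i j}"
    by auto
  finally show ?thesis unfolding bern_mat_prob_def by simp
qed

lemma row_prob_sum: "(\<Sum>r\<in>bvecs k. row_prob k p r) = 1"
  unfolding row_prob_def by (subst sum_prod_bvecs) simp

lemma bern_mat_prob_sum: "(\<Sum>A\<in>bmats n k. bern_mat_prob n k p A) = 1"
  unfolding bern_mat_prob_rows bmats_padded
  by (subst sum_prod_padded[OF finite_bvecs]) (simp add: row_prob_sum)

lemma bern_mat_prob_nonneg: "0 \<le> p \<Longrightarrow> p \<le> 1 \<Longrightarrow> 0 \<le> bern_mat_prob n k p A"
  unfolding bern_mat_prob_rows row_prob_def by (intro prod_nonneg) auto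

(* Bias of the parity of a random row against z (piling-up lemma). *)
lemma row_bias: "(\<Sum>r\<in>bvecs k. row_prob k p r * sign (row_parity k r z)) = (1 - 2 * p) ^ weight k z"
proof -
  have "(\<Sum>r\<in>bvecs k. row_prob k p r * sign (row_parity k r z))
      = (\<Sum>r\<in>bvecs k. \<Prod>j<k. (if r j then p else 1 - p) * sign (r j \<and> z j))"
    unfolding row_prob_def sign_row_parity prod.distrib by simp
  also have "\<dots> = (\<Prod>j<k. if z j then 1 - 2 * p else 1)"
    by (subst sum_prod_bvecs) (rule prod.cong, auto simp: sign_def)
  also have "\<dots> = (1 - 2 * p) ^ weight k z"
    by (simp add: prod_if_card weight_def)
  finally show ?thesis .
qed

lemma row_average:
  "(\<Sum>r\<in>bvecs k. row_prob k p r * (if row_parity k r z = b then 1 - e else e))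
     = (1 + sign b * ((1 - 2 * e) * (1 - 2 * p) ^ weight k z)) / 2"
proof -
  have "row_prob k p r * (if row_parity k r z = b then 1 - e else e)
      = row_prob k p r / 2 + (1 - 2 * e) * sign b / 2 * (row_prob k p r * sign (row_parity k r z))" for r
    by (auto simp: sign_def field_simps)
  then have "(\<Sum>r\<in>bvecs k. row_prob k p r * (if row_parity k r z = b then 1 - e else e))
      = (\<Sum>r\<in>bvecs k. row_prob k p r) / 2
        + (1 - 2 * e) * sign b / 2 * (\<Sum>r\<in>bvecs k. row_prob k p r * sign (row_parity k r z))"
    by (simp add: sum.distrib sum_distrib_left sum_divide_distrib)
  then show ?thesis unfolding row_prob_sum row_bias by (simp add: field_simps)
qed

lemma matrix_average:
  fixes e p :: real and k :: nat and z :: "nat \<Rightarrow> bool"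
  defines "c \<equiv> (1 - 2 * e) * (1 - 2 * p) ^ weight k z"
  shows "(\<Sum>A\<in>bmats n k. bern_mat_prob n k p A * lik n e y (encode n k A z))
    = ((1 - c) / 2) ^ weight n y * ((1 + c) / 2) ^ (n - weight n y)"
proof -
  have "(\<Sum>A\<in>bmats n k. bern_mat_prob n k p A * lik n e y (encode n k A z))
     = (\<Sum>A\<in>bmats n k. \<Prod>l<n. (\<lambda>l r. row_prob k p r * (if row_parity k r z = y l then 1 - e else e)) l (A l))"
    unfolding bern_mat_prob_rows lik_def prod.distrib[symmetric]
    by (intro sum.cong prod.cong refl) (simp add: encode_row_parity)
  also have "\<dots> = (\<Prod>l<n. (1 + sign (y l) * c) / 2)"
    unfolding bmats_padded c_def by (subst sum_prod_padded[OF finite_bvecs]) (simp add: row_average)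
  also have "\<dots> = (\<Prod>l<n. if y l then (1 - c) / 2 else (1 + c) / 2)"
    by (rule prod.cong) (auto simp: sign_def)
  also have "\<dots> = ((1 - c) / 2) ^ weight n y * ((1 + c) / 2) ^ (n - weight n y)"
    by (simp add: prod_if_card weight_def)
  finally show ?thesis .
qed

lemma expected_out_weight:
  "(\<Sum>A\<in>bmats n k. bern_mat_prob n k p A * out_weight n k e A y)
    = (\<Sum>j=0..k. real (k choose j) *
         (((1 - (1 - 2 * e) * (1 - 2 * p) ^ j) / 2) ^ weight n y *
          ((1 + (1 - 2 * e) * (1 - 2 * p) ^ j) / 2) ^ (n - weight n y)))"
proof -
  have "(\<Sum>A\<in>bmats n k. bern_mat_prob n k p A * out_weight n k e A y)
      = (\<Sum>z\<in>bvecs k. \<Sum>A\<in>bmats n k. bern_mat_prob n k p A * lik n e y (encode n k A z))"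
    unfolding out_weight_def by (subst sum.swap) (simp add: sum_distrib_left)
  also have "\<dots> = (\<Sum>z\<in>bvecs k. ((1 - (1 - 2 * e) * (1 - 2 * p) ^ weight k z) / 2) ^ weight n y *
          ((1 + (1 - 2 * e) * (1 - 2 * p) ^ weight k z) / 2) ^ (n - weight n y))"
    unfolding matrix_average ..
  also have "\<dots> = (\<Sum>j=0..k. real (k choose j) *
         (((1 - (1 - 2 * e) * (1 - 2 * p) ^ j) / 2) ^ weight n y *
          ((1 + (1 - 2 * e) * (1 - 2 * p) ^ j) / 2) ^ (n - weight n y)))"
    by (rule sum_bvecs_by_weight)
  finally show ?thesis .
qed

(* Jensen's inequality for the convex function t \<mapsto> 1/t on (0, \<infinity>). *)
lemma inverse_mean_le_mean_inverse:
  fixes q b :: "'a \<Rightarrow> real"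
  assumes "finite S" and "\<And>a. a \<in> S \<Longrightarrow> 0 \<le> q a" and "(\<Sum>a\<in>S. q a) = 1"
    and "\<And>a. a \<in> S \<Longrightarrow> 0 < b a"
  shows "1 / (\<Sum>a\<in>S. q a * b a) \<le> (\<Sum>a\<in>S. q a / b a)"
proof -
  have "S \<noteq> {}" using assms(3) by auto
  have "convex_on {0<..} (inverse :: real \<Rightarrow> real)"
    by (rule convex_on_inverse) auto
  from convex_on_sum[OF assms(1) \<open>S \<noteq> {}\<close> this assms(3,2)] assms(4)
  show ?thesis by (simp add: divide_inverse)
qed

(* Step (2): Jensen applied to each summand of the formula for p_c. *)
lemma expected_p_c_lower_bound:
  assumes "0 < e" "e < 1" "0 \<le> p" "p \<le> 1"
  shows "(\<Sum>y\<in>bvecs n. lik n e y (\<lambda>_. False) ^ 2 /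
            (\<Sum>A\<in>bmats n k. bern_mat_prob n k p A * out_weight n k e A y))
    \<le> (\<Sum>A\<in>bmats n k. bern_mat_prob n k p A * p_c n k e A)"
proof -
  let ?q = "bern_mat_prob n k p"
  have "(\<Sum>y\<in>bvecs n. lik n e y (\<lambda>_. False) ^ 2 * (1 / (\<Sum>A\<in>bmats n k. ?q A * out_weight n k e A y)))
      \<le> (\<Sum>y\<in>bvecs n. lik n e y (\<lambda>_. False) ^ 2 * (\<Sum>A\<in>bmats n k. ?q A / out_weight n k e A y))"
    using assms
    by (intro sum_mono mult_left_mono inverse_mean_le_mean_inverse finite_bmats
          bern_mat_prob_sum bern_mat_prob_nonneg out_weight_pos) auto
  also have "\<dots> = (\<Sum>y\<in>bvecs n. \<Sum>A\<in>bmats n k. ?q A * (lik n e y (\<lambda>_. False) ^ 2 / out_weight n k e A y))"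
    unfolding sum_distrib_left by (intro sum.cong refl) simp
  also have "\<dots> = (\<Sum>A\<in>bmats n k. ?q A * p_c n k e A)"
    unfolding p_c_formula[OF assms(1,2)] sum_distrib_left by (rule sum.swap)
  finally show ?thesis by simp
qed

lemma rescaled_term:
  fixes e :: real and c :: "nat \<Rightarrow> real"
  assumes "i \<le> n"
  shows "(e ^ i * (1 - e) ^ (n - i)) ^ 2 /
           (\<Sum>j=0..k. real (k choose j) * (((1 - c j) / 2) ^ i * ((1 + c j) / 2) ^ (n - i)))
       = 2 ^ n * e ^ (2 * i) * (1 - e) ^ (2 * (n - i)) /
           (\<Sum>j=0..k. real (k choose j) * (1 - c j) ^ i * (1 + c j) ^ (n - i))"
proof -
  have two: "(2::real) ^ n = 2 ^ i * 2 ^ (n - i)"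
    using assms by (simp add: power_add[symmetric])
  have "(\<Sum>j=0..k. real (k choose j) * (((1 - c j) / 2) ^ i * ((1 + c j) / 2) ^ (n - i)))
      = (\<Sum>j=0..k. real (k choose j) * (1 - c j) ^ i * (1 + c j) ^ (n - i)) / 2 ^ n"
    unfolding sum_divide_distrib two by (intro sum.cong refl) (simp add: power_divide)
  then show ?thesis
    by (simp add: power_mult_distrib power_mult[symmetric] mult.commute)
qed

theorem theorem1:
  fixes eps rho :: real and n k :: nat
  assumes "0 < eps" "eps < 1" "0 < rho" "rho < 1" "1 \<le> k" "k \<le> n"
  shows "(\<Sum>A\<in>bmats n k. bern_mat_prob n k rho A * p_c n k eps A)
    \<ge> (\<Sum>i=0..n. real (n choose i) *
          (2 ^ n * eps ^ (2 * i) * (1 - eps) ^ (2 * (n - i))) /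
          (\<Sum>j=0..k. real (k choose j) *
              (1 - (1 - 2 * eps) * (1 - 2 * rho) ^ j) ^ i *
              (1 + (1 - 2 * eps) * (1 - 2 * rho) ^ j) ^ (n - i)))"
proof -
  define c where "c j = (1 - 2 * eps) * (1 - 2 * rho) ^ j" for j
  define f where "f i = (eps ^ i * (1 - eps) ^ (n - i)) ^ 2 /
      (\<Sum>j=0..k. real (k choose j) * (((1 - c j) / 2) ^ i * ((1 + c j) / 2) ^ (n - i)))" for i
  have "(\<Sum>i=0..n. real (n choose i) *
          (2 ^ n * eps ^ (2 * i) * (1 - eps) ^ (2 * (n - i))) /
          (\<Sum>j=0..k. real (k choose j) *
              (1 - (1 - 2 * eps) * (1 - 2 * rho) ^ j) ^ i *
              (1 + (1 - 2 * eps) * (1 - 2 * rho) ^ j) ^ (n - i)))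
      = (\<Sum>i=0..n. real (n choose i) * f i)"
    unfolding f_def by (intro sum.cong refl) (simp add: rescaled_term c_def)
  also have "\<dots> = (\<Sum>y\<in>bvecs n. f (weight n y))"
    by (rule sum_bvecs_by_weight[symmetric])
  also have "\<dots> = (\<Sum>y\<in>bvecs n. lik n eps y (\<lambda>_. False) ^ 2 /
            (\<Sum>A\<in>bmats n k. bern_mat_prob n k rho A * out_weight n k eps A y))"
    unfolding f_def c_def lik_zero expected_out_weight ..
  also have "\<dots> \<le> (\<Sum>A\<in>bmats n k. bern_mat_prob n k rho A * p_c n k eps A)"
    using assms by (intro expected_p_c_lower_bound) auto
  finally show ?thesis .
qed

end
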